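(* Let $K$ be a Markov kernel on $\mathbb{R}$ such that $Kf\in\mathcal{C}_0(\mathbb{R})$ for every $f\in\mathcal{C}_0(\mathbb{R})$ and $Kf$ is bounded non-decreasing for every bounded non-decreasing Borel $f:\mathbb{R}\to\mathbb{R}$. Then for all $u,v\in\mathbb{R}$ and every $f\in\mathcal{C}_{u,v}(\mathbb{R})$, one has $Kf\in\mathcal{C}_{u,v}(\mathbb{R})$.
   Context: $\mathcal{C}_0(\mathbb{R})$ is the space of continuous functions vanishing at $\pm\infty$. For $u,v\in\mathbb{R}$, $\mathcal{C}_{u,v}(\mathbb{R})$ is the set of continuous $f:\mathbb{R}\to\mathbb{R}$ with $\lim_{x\to-\infty}f(x)=u$ and $\lim_{x\to+\infty}f(x)=v$. $Kf(x)=\int f(y)K(x,dy)$. *)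

theory Defs
  imports "HOL-Probability.Probability"
begin

definition markov_kernel_R :: "(real \<Rightarrow> real measure) \<Rightarrow> bool" where
  "markov_kernel_R K \<longleftrightarrow> K \<in> borel \<rightarrow>\<^sub>M prob_algebra borel"

definition kernel_apply :: "(real \<Rightarrow> real measure) \<Rightarrow> (real \<Rightarrow> real) \<Rightarrow> real \<Rightarrow> real" where
  "kernel_apply K f x = (\<integral>y. f y \<partial>(K x))"

definition C0 :: "(real \<Rightarrow> real) set" where
  "C0 = {f. continuous_on UNIV f \<and> (f \<longlongrightarrow> 0) at_bot \<and> (f \<longlongrightarrow> 0) at_top}"

definition Cuv :: "real \<Rightarrow> real \<Rightarrow> (real \<Rightarrow> real) set" where
  "Cuv u v = {f. continuous_on UNIV f \<and> (f \<longlongrightarrow> u) at_bot \<and> (f \<longlongrightarrow> v) at_top}"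

end

theory Submission
  imports Defs
begin

text \<open>Write \<open>f = g + u + (v - u) * ramp\<close> with \<open>g \<in> C0\<close>; by linearity it suffices to show
  that \<open>K ramp\<close> lies in \<open>Cuv 0 1\<close>. For every shift \<open>a\<close>, \<open>K ramp - K ramp(\<cdot> - a)\<close> is the image
  of a \<open>C0\<close> function, hence in \<open>C0\<close>. On the other hand \<open>K ramp(\<cdot> - a)\<close> is monotone, so a single
  distribution function \<open>cdf (K x1)\<close> shows that for \<open>a\<close> far to the left it is within \<open>\<epsilon>\<close> of 1 on
  all of \<open>[x1, \<infinity>)\<close>, and for \<open>a\<close> far to the right within \<open>\<epsilon>\<close> of 0 on \<open>(-\<infinity>, x1]\<close>. Thus on
  every half-line \<open>K ramp\<close> is uniformly approximated by continuous functions with the right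
  limits, which yields continuity and both limits at infinity.\<close>

lemma C0_eq_Cuv: "C0 = Cuv 0 0"
  unfolding C0_def Cuv_def ..

lemma Cuv_add:
  assumes "f \<in> Cuv a b" "g \<in> Cuv c d"
  shows "(\<lambda>x. f x + g x) \<in> Cuv (a + c) (b + d)"
  using assms unfolding Cuv_def by (auto intro!: continuous_intros tendsto_intros)

lemma Cuv_affine:
  assumes "f \<in> Cuv a b"
  shows "(\<lambda>x. c + d * f x) \<in> Cuv (c + d * a) (c + d * b)"
  using assms unfolding Cuv_def by (auto intro!: continuous_intros tendsto_intros)

lemma Cuv_diff_in_C0:
  assumes "f \<in> Cuv u v" "g \<in> Cuv u v"
  shows "(\<lambda>x. f x - g x) \<in> C0"
  using Cuv_add[OF assms(1) Cuv_affine[OF assms(2), of 0 "-1"]] by (simp add: C0_eq_Cuv)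

lemma Cuv_bounded:
  assumes "f \<in> Cuv u v"
  obtains B where "\<And>y. \<bar>f y\<bar> \<le> B"
proof -
  have cont: "continuous_on UNIV f"
    and lim_bot: "(f \<longlongrightarrow> u) at_bot" and lim_top: "(f \<longlongrightarrow> v) at_top"
    using assms unfolding Cuv_def by auto
  obtain L where L: "\<And>y. y \<le> L \<Longrightarrow> \<bar>f y - u\<bar> < 1"
    using tendstoD[OF lim_bot, of 1] by (auto simp: eventually_at_bot_linorder dist_real_def)
  obtain R where R: "\<And>y. y \<ge> R \<Longrightarrow> \<bar>f y - v\<bar> < 1"
    using tendstoD[OF lim_top, of 1] by (auto simp: eventually_at_top_linorder dist_real_def)
  have "compact (f ` {L..R})"
    by (rule compact_continuous_image[OF continuous_on_subset[OF cont]]) auto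
  then obtain M where M: "\<And>y. y \<in> {L..R} \<Longrightarrow> \<bar>f y\<bar> \<le> M"
    using compact_imp_bounded bounded_iff real_norm_def by (metis image_eqI)
  have "\<bar>f y\<bar> \<le> \<bar>M\<bar> + \<bar>u\<bar> + \<bar>v\<bar> + 1" for y
  proof (cases "y \<in> {L..R}")
    case True
    then show ?thesis using M[OF True] by arith
  next
    case False
    then show ?thesis using L[of y] R[of y] by (auto simp: not_le)
  qed
  then show thesis by (rule that)
qed

lemma tendsto_if_uniformly_approximable:
  fixes S :: "'a \<Rightarrow> real"
  assumes "\<And>\<epsilon>. \<epsilon> > 0 \<Longrightarrow> \<exists>g. (g \<longlongrightarrow> l) F \<and> eventually (\<lambda>x. \<bar>S x - g x\<bar> \<le> \<epsilon>) F"
  shows "(S \<longlongrightarrow> l) F"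
  unfolding tendsto_iff
proof (intro allI impI)
  fix e :: real assume "e > 0"
  then obtain g where g: "(g \<longlongrightarrow> l) F"
    and close: "eventually (\<lambda>x. \<bar>S x - g x\<bar> \<le> e / 2) F"
    using assms[of "e / 2"] by auto
  have "eventually (\<lambda>x. dist (g x) l < e / 2) F"
    using g by (rule tendstoD) (use \<open>e > 0\<close> in simp)
  with close show "eventually (\<lambda>x. dist (S x) l < e) F"
    by eventually_elim (unfold dist_real_def, arith)
qed

lemma isCont_if_uniformly_approximable:
  fixes S :: "'a::t2_space \<Rightarrow> real"
  assumes "\<And>\<epsilon>. \<epsilon> > 0 \<Longrightarrow> \<exists>g. isCont g x0 \<and> eventually (\<lambda>x. \<bar>S x - g x\<bar> \<le> \<epsilon>) (nhds x0)"
  shows "isCont S x0"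
  unfolding isCont_def tendsto_iff
proof (intro allI impI)
  fix e :: real assume "e > 0"
  then obtain g where g: "isCont g x0"
    and close: "eventually (\<lambda>x. \<bar>S x - g x\<bar> \<le> e / 3) (nhds x0)"
    using assms[of "e / 3"] by auto
  have at_x0: "\<bar>S x0 - g x0\<bar> \<le> e / 3"
    using close by (rule eventually_nhds_x_imp_x)
  have "eventually (\<lambda>x. dist (g x) (g x0) < e / 3) (at x0)"
    using g[unfolded isCont_def] by (rule tendstoD) (use \<open>e > 0\<close> in simp)
  moreover have "eventually (\<lambda>x. \<bar>S x - g x\<bar> \<le> e / 3) (at x0)"
    using close unfolding eventually_at_filter by (rule eventually_mono) simp
  ultimately show "eventually (\<lambda>x. dist (S x) (S x0) < e) (at x0)"
    by eventually_elim (use at_x0 in \<open>unfold dist_real_def, arith\<close>)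
qed

definition ramp :: "real \<Rightarrow> real" where
  "ramp y = max 0 (min 1 y)"

lemma shifted_ramp_in_Cuv: "(\<lambda>y. ramp (y - a)) \<in> Cuv 0 1"
proof -
  have "eventually (\<lambda>y. ramp (y - a) = 0) at_bot"
    by (auto simp: ramp_def eventually_at_bot_linorder intro: exI[of _ a])
  moreover have "eventually (\<lambda>y. ramp (y - a) = 1) at_top"
    by (auto simp: ramp_def eventually_at_top_linorder intro: exI[of _ "a + 1"])
  ultimately show ?thesis
    unfolding Cuv_def ramp_def by (auto intro!: continuous_intros tendsto_eventually)
qed

lemma ramp_in_Cuv: "ramp \<in> Cuv 0 1"
  using shifted_ramp_in_Cuv[of 0] by simp

lemma shifted_ramp_bounds:
  "indicator {a + 1<..} y \<le> ramp (y - a)" "ramp (y - a) \<le> indicator {a<..} y"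
  by (auto simp: ramp_def indicator_def)

context
  fixes K :: "real \<Rightarrow> real measure"
  assumes kernel: "markov_kernel_R K"
begin

lemma real_distribution_kernel: "real_distribution (K x)"
  using measurable_space[OF kernel[unfolded markov_kernel_R_def], of x]
  by (simp add: space_prob_algebra real_distribution_def real_distribution_axioms_def)

lemma integrable_kernel_Cuv:
  assumes "f \<in> Cuv u v"
  shows "integrable (K x) f"
proof -
  interpret real_distribution "K x" by (rule real_distribution_kernel)
  obtain B where "\<And>y. \<bar>f y\<bar> \<le> B" using Cuv_bounded[OF assms] by blast
  moreover have "f \<in> borel_measurable borel"
    using assms unfolding Cuv_def by (auto intro: borel_measurable_continuous_onI)
  ultimately show ?thesis
    by (intro integrable_const_bound[where B = B]) auto
qed

lemma kernel_apply_add: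
  "integrable (K x) f \<Longrightarrow> integrable (K x) g \<Longrightarrow>
    kernel_apply K (\<lambda>y. f y + g y) x = kernel_apply K f x + kernel_apply K g x"
  unfolding kernel_apply_def by (rule Bochner_Integration.integral_add)

lemma kernel_apply_diff:
  "integrable (K x) f \<Longrightarrow> integrable (K x) g \<Longrightarrow>
    kernel_apply K (\<lambda>y. f y - g y) x = kernel_apply K f x - kernel_apply K g x"
  unfolding kernel_apply_def by (rule Bochner_Integration.integral_diff)

lemma kernel_apply_affine:
  assumes "integrable (K x) f"
  shows "kernel_apply K (\<lambda>y. c + d * f y) x = c + d * kernel_apply K f x"
proof -
  interpret real_distribution "K x" by (rule real_distribution_kernel)
  show ?thesis
    unfolding kernel_apply_def using assms prob_space by simp
qed

lemma kernel_apply_mono: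
  "integrable (K x) f \<Longrightarrow> integrable (K x) g \<Longrightarrow> (\<And>y. f y \<le> g y) \<Longrightarrow>
    kernel_apply K f x \<le> kernel_apply K g x"
  unfolding kernel_apply_def by (rule integral_mono)

lemma kernel_apply_indicator_greaterThan:
  "kernel_apply K (indicator {a<..}) x = 1 - cdf (K x) a"
proof -
  interpret real_distribution "K x" by (rule real_distribution_kernel)
  have "{a<..} = space (K x) - {..a}" by auto
  then show ?thesis
    unfolding kernel_apply_def cdf_def using prob_compl[of "{..a}"] by simp
qed

lemma integrable_kernel_indicator_greaterThan:
  "integrable (K x) (indicator {a<..} :: real \<Rightarrow> real)"
proof -
  interpret real_distribution "K x" by (rule real_distribution_kernel)
  show ?thesis by (intro integrable_real_indicator) (auto simp: less_top[symmetric])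
qed

lemma cdf_kernel_bounds: "0 \<le> cdf (K x) a" "cdf (K x) a \<le> 1"
  using real_distribution_kernel[of x]
  by (simp_all add: real_distribution.cdf_bounded_prob finite_borel_measure.cdf_nonneg
      real_distribution.finite_borel_measure_M)

lemma kernel_apply_shifted_ramp_bounds:
  "1 - cdf (K x) (a + 1) \<le> kernel_apply K (\<lambda>y. ramp (y - a)) x"
  "kernel_apply K (\<lambda>y. ramp (y - a)) x \<le> 1 - cdf (K x) a"
  using kernel_apply_mono[OF integrable_kernel_indicator_greaterThan
      integrable_kernel_Cuv[OF shifted_ramp_in_Cuv] shifted_ramp_bounds(1)]
    kernel_apply_mono[OF integrable_kernel_Cuv[OF shifted_ramp_in_Cuv]
      integrable_kernel_indicator_greaterThan shifted_ramp_bounds(2)]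
  by (simp_all add: kernel_apply_indicator_greaterThan)

context
  assumes C0_preserving: "\<And>f. f \<in> C0 \<Longrightarrow> kernel_apply K f \<in> C0"
    and mono_preserving: "\<And>f. f \<in> borel_measurable borel \<Longrightarrow> bounded (range f) \<Longrightarrow> mono f \<Longrightarrow>
           bounded (range (kernel_apply K f)) \<and> mono (kernel_apply K f)"
begin

lemma mono_kernel_apply_shifted_ramp: "mono (kernel_apply K (\<lambda>y. ramp (y - a)))"
proof -
  have "bounded (range (\<lambda>y. ramp (y - a)))"
    by (auto simp: bounded_iff ramp_def intro!: exI[of _ 1])
  moreover have "mono (\<lambda>y. ramp (y - a))"
    by (auto simp: mono_def ramp_def)
  moreover have "(\<lambda>y. ramp (y - a)) \<in> borel_measurable borel"
    using shifted_ramp_in_Cuv unfolding Cuv_def by (auto intro: borel_measurable_continuous_onI)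
  ultimately show ?thesis
    using mono_preserving by blast
qed

lemma kernel_apply_shifted_ramp_near_1:
  assumes "\<epsilon> > 0"
  shows "\<exists>a. \<forall>x\<ge>x1. \<bar>kernel_apply K (\<lambda>y. ramp (y - a)) x - 1\<bar> \<le> \<epsilon>"
proof -
  interpret real_distribution "K x1" by (rule real_distribution_kernel)
  obtain b where b: "cdf (K x1) b < \<epsilon>"
    using order_tendstoD(2)[OF cdf_lim_at_bot assms] by (auto simp: eventually_at_bot_linorder)
  have "\<bar>kernel_apply K (\<lambda>y. ramp (y - (b - 1))) x - 1\<bar> \<le> \<epsilon>" if "x \<ge> x1" for x
    using kernel_apply_shifted_ramp_bounds[where x = x1 and a = "b - 1"]
      kernel_apply_shifted_ramp_bounds[where x = x and a = "b - 1"]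
      monoD[OF mono_kernel_apply_shifted_ramp that, of "b - 1"] b cdf_kernel_bounds[of x "b - 1"]
    by simp
  then show ?thesis by blast
qed

lemma kernel_apply_shifted_ramp_near_0:
  assumes "\<epsilon> > 0"
  shows "\<exists>a. \<forall>x\<le>x1. \<bar>kernel_apply K (\<lambda>y. ramp (y - a)) x\<bar> \<le> \<epsilon>"
proof -
  interpret real_distribution "K x1" by (rule real_distribution_kernel)
  obtain a where a: "cdf (K x1) a > 1 - \<epsilon>"
    using order_tendstoD(1)[OF cdf_lim_at_top_prob, of "1 - \<epsilon>"] assms
    by (auto simp: eventually_at_top_linorder)
  have "\<bar>kernel_apply K (\<lambda>y. ramp (y - a)) x\<bar> \<le> \<epsilon>" if "x \<le> x1" for x
    using kernel_apply_shifted_ramp_bounds[where x = x1 and a = a]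
      kernel_apply_shifted_ramp_bounds[where x = x and a = a]
      monoD[OF mono_kernel_apply_shifted_ramp that, of a] a cdf_kernel_bounds[of x "a + 1"]
    by simp
  then show ?thesis by blast
qed

lemma kernel_apply_ramp_in_Cuv: "kernel_apply K ramp \<in> Cuv 0 1"
proof -
  define D where "D a = kernel_apply K (\<lambda>y. ramp y - ramp (y - a))" for a
  have D_C0: "D a \<in> C0" for a
    unfolding D_def by (intro C0_preserving Cuv_diff_in_C0[OF ramp_in_Cuv shifted_ramp_in_Cuv])
  have decompose: "kernel_apply K ramp x = D a x + kernel_apply K (\<lambda>y. ramp (y - a)) x" for a x
    unfolding D_def
    by (simp add: kernel_apply_diff integrable_kernel_Cuv[OF ramp_in_Cuv]
        integrable_kernel_Cuv[OF shifted_ramp_in_Cuv])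
  have "isCont (kernel_apply K ramp) x0" for x0
  proof (rule isCont_if_uniformly_approximable)
    fix \<epsilon> :: real assume "\<epsilon> > 0"
    then obtain a where a: "\<forall>x\<ge>x0 - 1. \<bar>kernel_apply K (\<lambda>y. ramp (y - a)) x - 1\<bar> \<le> \<epsilon>"
      using kernel_apply_shifted_ramp_near_1 by blast
    have "isCont (\<lambda>x. 1 + D a x) x0"
      using D_C0[of a] unfolding C0_def
      by (auto intro!: continuous_intros simp: continuous_on_eq_continuous_at)
    moreover have "eventually (\<lambda>x. x > x0 - 1) (nhds x0)"
      by (rule order_tendstoD(1)[OF filterlim_ident]) simp
    then have "eventually (\<lambda>x. \<bar>kernel_apply K ramp x - (1 + D a x)\<bar> \<le> \<epsilon>) (nhds x0)"
      by eventually_elim (use a in \<open>simp add: decompose[of _ a]\<close>)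
    ultimately show "\<exists>g. isCont g x0 \<and>
        eventually (\<lambda>x. \<bar>kernel_apply K ramp x - g x\<bar> \<le> \<epsilon>) (nhds x0)"
      by blast
  qed
  moreover have "(kernel_apply K ramp \<longlongrightarrow> 1) at_top"
  proof (rule tendsto_if_uniformly_approximable)
    fix \<epsilon> :: real assume "\<epsilon> > 0"
    then obtain a where a: "\<forall>x\<ge>0. \<bar>kernel_apply K (\<lambda>y. ramp (y - a)) x - 1\<bar> \<le> \<epsilon>"
      using kernel_apply_shifted_ramp_near_1 by blast
    have "((\<lambda>x. 1 + D a x) \<longlongrightarrow> 1) at_top"
      using D_C0[of a] tendsto_add[OF tendsto_const, of "D a" 0 at_top 1]
      unfolding C0_def by simp
    moreover have "eventually (\<lambda>x. \<bar>kernel_apply K ramp x - (1 + D a x)\<bar> \<le> \<epsilon>) at_top"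
      using eventually_ge_at_top[of 0] by eventually_elim (use a in \<open>simp add: decompose[of _ a]\<close>)
    ultimately show "\<exists>g. (g \<longlongrightarrow> 1) at_top \<and>
        eventually (\<lambda>x. \<bar>kernel_apply K ramp x - g x\<bar> \<le> \<epsilon>) at_top"
      by blast
  qed
  moreover have "(kernel_apply K ramp \<longlongrightarrow> 0) at_bot"
  proof (rule tendsto_if_uniformly_approximable)
    fix \<epsilon> :: real assume "\<epsilon> > 0"
    then obtain a where a: "\<forall>x\<le>0. \<bar>kernel_apply K (\<lambda>y. ramp (y - a)) x\<bar> \<le> \<epsilon>"
      using kernel_apply_shifted_ramp_near_0 by blast
    have "(D a \<longlongrightarrow> 0) at_bot"
      using D_C0[of a] unfolding C0_def by auto
    moreover have "eventually (\<lambda>x. \<bar>kernel_apply K ramp x - D a x\<bar> \<le> \<epsilon>) at_bot"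
      using eventually_le_at_bot[of 0] by eventually_elim (use a in \<open>simp add: decompose[of _ a]\<close>)
    ultimately show "\<exists>g. (g \<longlongrightarrow> 0) at_bot \<and>
        eventually (\<lambda>x. \<bar>kernel_apply K ramp x - g x\<bar> \<le> \<epsilon>) at_bot"
      by blast
  qed
  ultimately show ?thesis
    unfolding Cuv_def by (auto intro: continuous_at_imp_continuous_on)
qed

end

end

theorem proposition2p6:
  fixes K :: "real \<Rightarrow> real measure"
  assumes "markov_kernel_R K"
    and "\<And>f. f \<in> C0 \<Longrightarrow> kernel_apply K f \<in> C0"
    and "\<And>f. f \<in> borel_measurable borel \<Longrightarrow> bounded (range f) \<Longrightarrow> mono f \<Longrightarrow>
           bounded (range (kernel_apply K f)) \<and> mono (kernel_apply K f)"
  shows "\<forall>u v f. f \<in> Cuv u v \<longrightarrow> kernel_apply K f \<in> Cuv u v"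
proof (intro allI impI)
  fix u v and f :: "real \<Rightarrow> real"
  assume f: "f \<in> Cuv u v"
  define h where "h y = u + (v - u) * ramp y" for y
  have h: "h \<in> Cuv u v"
    using Cuv_affine[OF ramp_in_Cuv, of u "v - u"] by (simp add: h_def[abs_def])
  have rest: "(\<lambda>y. f y - h y) \<in> C0"
    by (rule Cuv_diff_in_C0[OF f h])
  have "kernel_apply K f =
      (\<lambda>x. kernel_apply K (\<lambda>y. f y - h y) x + (u + (v - u) * kernel_apply K ramp x))"
  proof
    fix x
    show "kernel_apply K f x =
        kernel_apply K (\<lambda>y. f y - h y) x + (u + (v - u) * kernel_apply K ramp x)"
      using kernel_apply_add[OF assms(1) integrable_kernel_Cuv[OF assms(1) rest[unfolded C0_eq_Cuv]]
          integrable_kernel_Cuv[OF assms(1) h], of x]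
        kernel_apply_affine[OF assms(1) integrable_kernel_Cuv[OF assms(1) ramp_in_Cuv]]
      by (simp add: h_def)
  qed
  also have "\<dots> \<in> Cuv (0 + (u + (v - u) * 0)) (0 + (u + (v - u) * 1))"
    using assms(2)[OF rest] unfolding C0_eq_Cuv
    by (intro Cuv_add Cuv_affine kernel_apply_ramp_in_Cuv[OF assms])
  finally show "kernel_apply K f \<in> Cuv u v"
    by simp
qed

end
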